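(* Let $k$ be a field, $V$ a $k$-vector space, $N\geq 2$, $R\subseteq V^{\otimes N}$ a subspace, $A=T(V)/(R)$, and $M$ an $A$-bimodule. For any $q\geq p\geq 0$ and any Koszul $p$-cochain $f:W_{\nu(p)}\to A$, the diagram $$\begin{array}{ccc}\mathrm{Hom}_k(M\otimes W_{\nu(q-p)},k)&\xrightarrow{\ [f,-]_{\underset{K}{\frown}}^{\ast}\ }&\mathrm{Hom}_k(M\otimes W_{\nu(q)},k)\\ \downarrow\eta_{q-p}&&\downarrow\eta_q\\ \mathrm{Hom}_k(W_{\nu(q-p)},M^{\ast})&\xrightarrow{\ -[f,-]_{\underset{K}{\smile}}\ }&\mathrm{Hom}_k(W_{\nu(q)},M^{\ast})\end{array}$$ commutes, where $\eta_r(\varphi)(x_1\dots x_{\nu(r)})(m)=\varphi(m\otimes x_1\dots x_{\nu(r)})$.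
   Context: $k$ field, $V$ a $k$-vector space, $N\ge 2$, $R\subseteq V^{\otimes N}$, $A=T(V)/(R)$. $W_0=k$, $W_p=V^{\otimes p}$ ($1\le p\le N-1$), $W_p=\bigcap_{i+N+j=p}V^{\otimes i}\otimes R\otimes V^{\otimes j}$ ($p\ge N$); $\nu(2p')=Np'$, $\nu(2p'+1)=Np'+1$. Elements of $W_p$ are written $x_1\dots x_p$ (a sum of such tensors), sub-blocks being read in the appropriate $W_r$; the $x_i$ act on bimodules via their images in $A$. $M^\ast=\mathrm{Hom}_k(M,k)$ with $(a.u.a')(m)=u(a'ma)$. Cup product of $f:W_{\nu(p)}\to P$, $g:W_{\nu(q)}\to Q$: if $p,q$ not both odd, $(f\underset{K}{\smile}g)(x_1\dots x_{\nu(p+q)})=f(x_1\dots x_{\nu(p)})\otimes_Ag(x_{\nu(p)+1}\dots x_{\nu(p)+\nu(q)})$; if both odd, $(f\underset{K}{\smile}g)(x_1\dots x_{\nu(p+q)})=-\sum_{0\le i+j\le N-2}x_1\dots x_if(x_{i+1}\dots x_{i+\nu(p)})x_{i+\nu(p)+1}\dots x_{\nu(p)+N-j-2}\otimes_Ag(x_{\nu(p)+N-j-1}\dots x_{\nu(p)+\nu(q)+N-j-2})x_{\nu(p)+\nu(q)+N-j-1}\dots x_{\nu(p)+\nu(q)+N-2}$. Cap products of $f:W_{\nu(p)}\to A$ and $z=m\otimes x_1\dots x_{\nu(q)}\in M\otimes W_{\nu(q)}$ (values in $M\otimes W_{\nu(q-p)}$, using $A\otimes_AM\cong M\cong M\otimes_AA$):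 if $p$ and $q-p$ not both odd, $f\underset{K}{\frown}z=f(x_{\nu(q-p)+1}\dots x_{\nu(q)})m\otimes x_1\dots x_{\nu(q-p)}$, $z\underset{K}{\frown}f=(-1)^{pq}mf(x_1\dots x_{\nu(p)})\otimes x_{\nu(p)+1}\dots x_{\nu(q)}$; if $p=2p'+1,q=2q'$: $f\underset{K}{\frown}z=-\sum_{0\le i+j\le N-2}x_{Nq'-Np'-N+i+2}\dots x_{Nq'-Np'-j-1}f(x_{Nq'-Np'-j}\dots x_{Nq'-j})x_{Nq'-j+1}\dots x_{Nq'}mx_1\dots x_i\otimes x_{i+1}\dots x_{i+Nq'-Np'-N+1}$, $z\underset{K}{\frown}f=\sum_{0\le i+j\le N-2}x_{Nq'-j+1}\dots x_{Nq'}mx_1\dots x_if(x_{i+1}\dots x_{Np'+i+1})x_{Np'+i+2}\dots x_{Np'+N-j-1}\otimes x_{Np'+N-j}\dots x_{Nq'-j}$. Brackets (graded commutators): for $f$ of degree $p$ and $z\in M\otimes W_{\nu(q)}$, $[f,z]_{\underset{K}{\frown}}=f\underset{K}{\frown}z-(-1)^{pq}z\underset{K}{\frown}f$; for $g:W_{\nu(r)}\to M^\ast$, $[f,g]_{\underset{K}{\smile}}=f\underset{K}{\smile}g-(-1)^{pr}g\underset{K}{\smile}f$ (identifying $A\otimes_AM^\ast\cong M^\ast\cong M^\ast\otimes_AA$). Transposes are graded: for a linear map $T$ from the degree-$q$ space to the degree-$(q-p)$ space, $T^\ast(\lambda)=(-1)^{p(q-p)}\lambda\circ T$. *)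

theory Defs
  imports Main
begin

text \<open>V is the free k-vector space on a basis type 'b (every vector space has a basis).
  Elements of T(V) are finitely supported functions 'b list => 'k (coefficients of words);
  V^{\<otimes>n} consists of those supported on words of length n.  M \<otimes> V^{\<otimes>n}
  is modelled as finitely supported functions 'b list => 'm supported on words of length n.\<close>

definition nu :: "nat \<Rightarrow> nat \<Rightarrow> nat" where
  "nu N p = (if even p then N * (p div 2) else N * (p div 2) + 1)"

definition sub :: "'b list \<Rightarrow> nat \<Rightarrow> nat \<Rightarrow> 'b list" where
  "sub w s l = take l (drop s w)"

definition wd :: "'b list \<Rightarrow> 'b list \<Rightarrow> 'k::field" where
  "wd u = (\<lambda>w. if w = u then 1 else 0)"

definition tprod :: "('b list \<Rightarrow> 'k::field) \<Rightarrow> ('b list \<Rightarrow> 'k) \<Rightarrow> 'b list \<Rightarrow> 'k" where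
  "tprod x y = (\<lambda>w. \<Sum>k\<le>length w. x (take k w) * y (drop k w))"

definition TV :: "('b list \<Rightarrow> 'k::field) set" where
  "TV = {x. finite {u. x u \<noteq> 0}}"

definition tens :: "nat \<Rightarrow> ('b list \<Rightarrow> 'k::field) set" where
  "tens n = {x \<in> TV. \<forall>u. x u \<noteq> 0 \<longrightarrow> length u = n}"

definition fspan :: "('b list \<Rightarrow> 'k::field) set \<Rightarrow> ('b list \<Rightarrow> 'k) set" where
  "fspan S = {x. \<exists>F c. finite F \<and> F \<subseteq> S \<and> x = (\<lambda>w. \<Sum>s\<in>F. c s * s w)}"

definition sandwich :: "('b list \<Rightarrow> 'k::field) set \<Rightarrow> nat \<Rightarrow> nat \<Rightarrow> ('b list \<Rightarrow> 'k) set" where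
  "sandwich R i j = fspan {tprod (tprod (wd u) r) (wd v) | u r v.
       length u = i \<and> r \<in> R \<and> length v = j}"

definition gen_ideal :: "('b list \<Rightarrow> 'k::field) set \<Rightarrow> ('b list \<Rightarrow> 'k) set" where
  "gen_ideal R = fspan {tprod (tprod (wd u) r) (wd v) | u r v. r \<in> R}"

definition KW :: "nat \<Rightarrow> ('b list \<Rightarrow> 'k::field) set \<Rightarrow> nat \<Rightarrow> ('b list \<Rightarrow> 'k) set" where
  "KW N R p = (if p = 0 then tens 0 else if p < N then tens p
     else {x \<in> tens p. \<forall>i j. i + N + j = p \<longrightarrow> x \<in> sandwich R i j})"

definition subspace_tens :: "nat \<Rightarrow> ('b list \<Rightarrow> 'k::field) set \<Rightarrow> bool" where
  "subspace_tens N R \<longleftrightarrow> R \<subseteq> tens N \<and> (\<lambda>_. 0) \<in> R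
     \<and> (\<forall>x\<in>R. \<forall>y\<in>R. (\<lambda>w. x w + y w) \<in> R)
     \<and> (\<forall>c. \<forall>x\<in>R. (\<lambda>w. c * x w) \<in> R)"

text \<open>pi : T(V) -> A is a surjective unital ring map with kernel (R), i.e. A = T(V)/(R).\<close>
definition presentation :: "('b list \<Rightarrow> 'k::field) set \<Rightarrow> (('b list \<Rightarrow> 'k) \<Rightarrow> 'a::ring_1) \<Rightarrow> bool" where
  "presentation R \<pi> \<longleftrightarrow>
     (\<forall>x\<in>TV. \<forall>y\<in>TV. \<pi> (\<lambda>w. x w + y w) = \<pi> x + \<pi> y)
   \<and> (\<forall>x\<in>TV. \<forall>y\<in>TV. \<pi> (tprod x y) = \<pi> x * \<pi> y)
   \<and> \<pi> (wd []) = 1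
   \<and> \<pi> ` TV = UNIV
   \<and> (\<forall>x\<in>TV. \<pi> x = 0 \<longleftrightarrow> x \<in> gen_ideal R)"

definition kap :: "(('b list \<Rightarrow> 'k::field) \<Rightarrow> 'a::ring_1) \<Rightarrow> 'k \<Rightarrow> 'a" where
  "kap \<pi> c = \<pi> (\<lambda>w. c * wd [] w)"

definition bimodule :: "(('b list \<Rightarrow> 'k::field) \<Rightarrow> 'a::ring_1) \<Rightarrow> ('a \<Rightarrow> 'm::ab_group_add \<Rightarrow> 'm)
     \<Rightarrow> ('m \<Rightarrow> 'a \<Rightarrow> 'm) \<Rightarrow> bool" where
  "bimodule \<pi> lact ract \<longleftrightarrow>
     (\<forall>a b m. lact (a + b) m = lact a m + lact b m)
   \<and> (\<forall>a m n. lact a (m + n) = lact a m + lact a n)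
   \<and> (\<forall>a b m. lact (a * b) m = lact a (lact b m))
   \<and> (\<forall>m. lact 1 m = m)
   \<and> (\<forall>a b m. ract m (a + b) = ract m a + ract m b)
   \<and> (\<forall>a m n. ract (m + n) a = ract m a + ract n a)
   \<and> (\<forall>a b m. ract m (a * b) = ract (ract m a) b)
   \<and> (\<forall>m. ract m 1 = m)
   \<and> (\<forall>a b m. lact a (ract m b) = ract (lact a m) b)
   \<and> (\<forall>c m. lact (kap \<pi> c) m = ract m (kap \<pi> c))"

definition smulM :: "(('b list \<Rightarrow> 'k::field) \<Rightarrow> 'a::ring_1) \<Rightarrow> ('a \<Rightarrow> 'm \<Rightarrow> 'm) \<Rightarrow> 'k \<Rightarrow> 'm \<Rightarrow> 'm" where
  "smulM \<pi> lact c m = lact (kap \<pi> c) m"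

definition signM :: "nat \<Rightarrow> 'm::ab_group_add \<Rightarrow> 'm" where
  "signM e m = (if even e then m else - m)"

definition MT :: "nat \<Rightarrow> ('b list \<Rightarrow> 'm::ab_group_add) set" where
  "MT n = {z. finite {u. z u \<noteq> 0} \<and> (\<forall>u. z u \<noteq> 0 \<longrightarrow> length u = n)}"

definition mtens :: "'m::ab_group_add \<Rightarrow> 'b list \<Rightarrow> 'b list \<Rightarrow> 'm" where
  "mtens m u = (\<lambda>v. if v = u then m else 0)"

definition lin_functional :: "(('b list \<Rightarrow> 'k::field) \<Rightarrow> 'a::ring_1) \<Rightarrow> ('a \<Rightarrow> 'm::ab_group_add \<Rightarrow> 'm)
    \<Rightarrow> nat \<Rightarrow> (('b list \<Rightarrow> 'm) \<Rightarrow> 'k) \<Rightarrow> bool" where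
  "lin_functional \<pi> lact n \<phi> \<longleftrightarrow>
     (\<forall>z\<in>MT n. \<forall>z'\<in>MT n. \<phi> (\<lambda>v. z v + z' v) = \<phi> z + \<phi> z')
   \<and> (\<forall>c. \<forall>z\<in>MT n. \<phi> (\<lambda>v. smulM \<pi> lact c (z v)) = c * \<phi> z)"

text \<open>eta_r(phi)(u)(m) = phi(m \<otimes> u), on words u (extended linearly).\<close>
definition eta :: "(('b list \<Rightarrow> 'm::ab_group_add) \<Rightarrow> 'k) \<Rightarrow> 'b list \<Rightarrow> 'm \<Rightarrow> 'k" where
  "eta \<phi> = (\<lambda>u m. \<phi> (mtens m u))"

text \<open>Cap product f \<frown> (m \<otimes> w) on a basis word w of length nu(q).\<close>
definition cap_l :: "nat \<Rightarrow> (('b list \<Rightarrow> 'k::field) \<Rightarrow> 'a::ring_1) \<Rightarrow> ('a \<Rightarrow> 'm::ab_group_add \<Rightarrow> 'm)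
    \<Rightarrow> ('m \<Rightarrow> 'a \<Rightarrow> 'm) \<Rightarrow> nat \<Rightarrow> nat \<Rightarrow> ('b list \<Rightarrow> 'a) \<Rightarrow> 'm \<Rightarrow> 'b list \<Rightarrow> 'b list \<Rightarrow> 'm" where
  "cap_l N \<pi> lact ract p q f m w =
     (if odd p \<and> odd (q - p) then
        (let p' = p div 2; q' = q div 2; L = N * q'; a = N * q' - N * p' in
         (\<lambda>v. - (\<Sum>(i,j)\<in>{(i,j). i + j \<le> N - 2}.
             mtens (lact (\<pi> (wd (sub w (a - N + i + 1) (N - 2 - i - j)))
                          * f (sub w (a - j - 1) (N * p' + 1))
                          * \<pi> (wd (sub w (L - j) j)))
                         (ract m (\<pi> (wd (sub w 0 i)))))
                   (sub w i (a - N + 1)) v)))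
      else mtens (lact (f (drop (nu N (q - p)) w)) m) (take (nu N (q - p)) w))"

text \<open>Cap product (m \<otimes> w) \<frown> f on a basis word w of length nu(q).\<close>
definition cap_r :: "nat \<Rightarrow> (('b list \<Rightarrow> 'k::field) \<Rightarrow> 'a::ring_1) \<Rightarrow> ('a \<Rightarrow> 'm::ab_group_add \<Rightarrow> 'm)
    \<Rightarrow> ('m \<Rightarrow> 'a \<Rightarrow> 'm) \<Rightarrow> nat \<Rightarrow> nat \<Rightarrow> ('b list \<Rightarrow> 'a) \<Rightarrow> 'm \<Rightarrow> 'b list \<Rightarrow> 'b list \<Rightarrow> 'm" where
  "cap_r N \<pi> lact ract p q f m w =
     (if odd p \<and> odd (q - p) then
        (let p' = p div 2; q' = q div 2; L = N * q'; P = N * p' in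
         (\<lambda>v. \<Sum>(i,j)\<in>{(i,j). i + j \<le> N - 2}.
             mtens (lact (\<pi> (wd (sub w (L - j) j)))
                         (ract m (\<pi> (wd (sub w 0 i)) * f (sub w i (P + 1))
                                  * \<pi> (wd (sub w (P + i + 1) (N - 2 - i - j))))))
                   (sub w (P + N - j - 1) (L - P - N + 1)) v))
      else (\<lambda>v. signM (p * q) (mtens (ract m (f (take (nu N p) w))) (drop (nu N p) w) v)))"

definition cap_bracket :: "nat \<Rightarrow> (('b list \<Rightarrow> 'k::field) \<Rightarrow> 'a::ring_1) \<Rightarrow> ('a \<Rightarrow> 'm::ab_group_add \<Rightarrow> 'm)
    \<Rightarrow> ('m \<Rightarrow> 'a \<Rightarrow> 'm) \<Rightarrow> nat \<Rightarrow> nat \<Rightarrow> ('b list \<Rightarrow> 'a) \<Rightarrow> 'm \<Rightarrow> ('b list \<Rightarrow> 'k) \<Rightarrow> 'b list \<Rightarrow> 'm" where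
  "cap_bracket N \<pi> lact ract p q f m x =
     (\<lambda>v. \<Sum>w\<in>{u. x u \<noteq> 0}. smulM \<pi> lact (x w)
          (cap_l N \<pi> lact ract p q f m w v - signM (p * q) (cap_r N \<pi> lact ract p q f m w v)))"

text \<open>(f \<smile> g)(w)(m) for f of degree p (values in A), g of degree r (values in M^*),
  on a basis word w of length nu(p+r).  (a.u.a')(m) = u(a' m a).\<close>
definition cup_fg :: "nat \<Rightarrow> (('b list \<Rightarrow> 'k::field) \<Rightarrow> 'a::ring_1) \<Rightarrow> ('a \<Rightarrow> 'm \<Rightarrow> 'm)
    \<Rightarrow> ('m \<Rightarrow> 'a \<Rightarrow> 'm) \<Rightarrow> nat \<Rightarrow> nat \<Rightarrow> ('b list \<Rightarrow> 'a) \<Rightarrow> ('b list \<Rightarrow> 'm \<Rightarrow> 'k)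
    \<Rightarrow> 'b list \<Rightarrow> 'm \<Rightarrow> 'k" where
  "cup_fg N \<pi> lact ract p r f g w m =
     (if odd p \<and> odd r then
        (let P = nu N p; Q = nu N r in
         - (\<Sum>(i,j)\<in>{(i,j). i + j \<le> N - 2}.
             g (sub w (P + N - j - 2) Q)
               (lact (\<pi> (wd (sub w (P + Q + N - j - 2) j)))
                     (ract m (\<pi> (wd (sub w 0 i)) * f (sub w i P)
                              * \<pi> (wd (sub w (i + P) (N - 2 - i - j))))))))
      else g (drop (nu N p) w) (ract m (f (take (nu N p) w))))"

text \<open>(g \<smile> f)(w)(m) for g of degree r (values in M^*), f of degree p (values in A).\<close>
definition cup_gf :: "nat \<Rightarrow> (('b list \<Rightarrow> 'k::field) \<Rightarrow> 'a::ring_1) \<Rightarrow> ('a \<Rightarrow> 'm \<Rightarrow> 'm)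
    \<Rightarrow> ('m \<Rightarrow> 'a \<Rightarrow> 'm) \<Rightarrow> nat \<Rightarrow> nat \<Rightarrow> ('b list \<Rightarrow> 'a) \<Rightarrow> ('b list \<Rightarrow> 'm \<Rightarrow> 'k)
    \<Rightarrow> 'b list \<Rightarrow> 'm \<Rightarrow> 'k" where
  "cup_gf N \<pi> lact ract p r f g w m =
     (if odd r \<and> odd p then
        (let P = nu N p; Q = nu N r in
         - (\<Sum>(i,j)\<in>{(i,j). i + j \<le> N - 2}.
             g (sub w i Q)
               (lact (\<pi> (wd (sub w (i + Q) (N - 2 - i - j))) * f (sub w (Q + N - j - 2) P)
                      * \<pi> (wd (sub w (P + Q + N - j - 2) j)))
                     (ract m (\<pi> (wd (sub w 0 i)))))))
      else g (take (nu N r) w) (lact (f (drop (nu N r) w)) m))"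

definition cup_bracket :: "nat \<Rightarrow> (('b list \<Rightarrow> 'k::field) \<Rightarrow> 'a::ring_1) \<Rightarrow> ('a \<Rightarrow> 'm \<Rightarrow> 'm)
    \<Rightarrow> ('m \<Rightarrow> 'a \<Rightarrow> 'm) \<Rightarrow> nat \<Rightarrow> nat \<Rightarrow> ('b list \<Rightarrow> 'a) \<Rightarrow> ('b list \<Rightarrow> 'm \<Rightarrow> 'k)
    \<Rightarrow> ('b list \<Rightarrow> 'k) \<Rightarrow> 'm \<Rightarrow> 'k" where
  "cup_bracket N \<pi> lact ract p r f g x m =
     (\<Sum>w\<in>{u. x u \<noteq> 0}. x w *
        (cup_fg N \<pi> lact ract p r f g w m
         - (-1) ^ (p * r) * cup_gf N \<pi> lact ract p r f g w m))"

end

theory Submission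
  imports Defs
begin

(* Both sides are linear in x, so it suffices to compare them on a basis word w of length nu(q).
   There f \<frown> (m \<otimes> w) is a sum of elementary tensors m' \<otimes> u whose values under \<phi> are
   exactly the terms eta(\<phi>)(u)(m') of (eta(\<phi>) \<smile> f)(w)(m), and likewise (m \<otimes> w) \<frown> f
   matches (f \<smile> eta(\<phi>))(w)(m) up to the sign (-1)^(p(q-p)).  The subwords have the right
   lengths because nu(p) + nu(q-p) is nu(q), or nu(q) - N + 2 when p and q - p are both odd. *)

lemma nu_add:
  assumes "\<not> (odd a \<and> odd b)"
  shows "nu N (a + b) = nu N a + nu N b"
  using assms by (auto simp: nu_def algebra_simps elim!: evenE oddE) presburger+

lemma nu_add_odd_odd:
  assumes "odd a" "odd b"
  shows "nu N (a + b) = nu N a + nu N b + N - 2"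
proof -
  obtain a' b' where "a = 2 * a' + 1" "b = 2 * b' + 1" using assms by (meson oddE)
  then show ?thesis by (simp add: nu_def algebra_simps)
qed

lemma nu_eq_add_nu_diff:
  assumes "\<not> (odd p \<and> odd (q - p))" "p \<le> q"
  shows "nu N q = nu N p + nu N (q - p)"
  using nu_add[OF assms(1), of N] assms(2) by simp

lemma length_sub_both_odd:
  assumes "odd p" "odd (q - p)" "p \<le> q" "N \<ge> 1" "length w = nu N q" "s \<le> nu N p + N - 2"
  shows "length (sub w s (nu N (q - p))) = nu N (q - p)"
proof -
  have "nu N q = nu N p + nu N (q - p) + N - 2"
    using nu_add_odd_odd[OF assms(1,2), of N] assms(3) by simp
  moreover have "nu N p \<ge> 1" using assms(1) by (simp add: nu_def)
  ultimately show ?thesis using assms(4-6) by (simp add: sub_def)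
qed

lemma KW_subset_tens: "KW N R n \<subseteq> tens n"
  by (auto simp: KW_def)

lemma signM_signM [simp]: "signM e (signM e y) = y"
  by (simp add: signM_def)

lemma signM_even [simp]: "even e \<Longrightarrow> signM e y = y"
  by (simp add: signM_def)

lemma bimodule_lact_zero: "bimodule \<pi> lact ract \<Longrightarrow> lact a 0 = 0"
  unfolding bimodule_def by (metis add_cancel_right_right)

lemma MT_mtens: "length u = n \<Longrightarrow> mtens m u \<in> MT n"
  by (auto simp: MT_def mtens_def intro: finite_subset[of _ "{u}"])

lemma MT_zero: "(\<lambda>v. 0) \<in> MT n"
  by (simp add: MT_def)

lemma MT_add:
  assumes "z \<in> MT n" "z' \<in> MT n"
  shows "(\<lambda>v. z v + z' v) \<in> MT n"
proof -
  have "{u. z u + z' u \<noteq> 0} \<subseteq> {u. z u \<noteq> 0} \<union> {u. z' u \<noteq> 0}" by auto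
  with assms show ?thesis by (auto simp: MT_def intro: finite_subset)
qed

lemma MT_uminus: "z \<in> MT n \<Longrightarrow> (\<lambda>v. - z v) \<in> MT n"
  by (simp add: MT_def)

lemma MT_diff: "z \<in> MT n \<Longrightarrow> z' \<in> MT n \<Longrightarrow> (\<lambda>v. z v - z' v) \<in> MT n"
  using MT_add[OF _ MT_uminus, of z n z'] by simp

lemma MT_smulM:
  assumes "bimodule \<pi> lact ract" "z \<in> MT n"
  shows "(\<lambda>v. smulM \<pi> lact c (z v)) \<in> MT n"
proof -
  have "{u. smulM \<pi> lact c (z u) \<noteq> 0} \<subseteq> {u. z u \<noteq> 0}"
    using bimodule_lact_zero[OF assms(1)] by (auto simp: smulM_def)
  with assms(2) show ?thesis by (auto simp: MT_def intro: finite_subset)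
qed

lemma MT_sum: "finite S \<Longrightarrow> (\<And>s. s \<in> S \<Longrightarrow> F s \<in> MT n) \<Longrightarrow> (\<lambda>v. \<Sum>s\<in>S. F s v) \<in> MT n"
  by (induction S rule: finite_induct) (simp_all add: MT_zero MT_add)

lemma MT_sum_mtens:
  assumes "finite I" "\<And>i j. (i, j) \<in> I \<Longrightarrow> length (u i j) = n"
  shows "(\<lambda>v. \<Sum>(i, j)\<in>I. mtens (c i j) (u i j) v) \<in> MT n"
proof -
  have "mtens (c (fst s) (snd s)) (u (fst s) (snd s)) \<in> MT n" if "s \<in> I" for s
    using that assms(2) by (cases s) (auto intro: MT_mtens)
  from MT_sum[OF assms(1) this] show ?thesis by (simp add: split_def)
qed

context
  fixes \<pi> :: "('b list \<Rightarrow> 'k::field) \<Rightarrow> 'a::ring_1" and lact :: "'a \<Rightarrow> 'm::ab_group_add \<Rightarrow> 'm"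
    and n :: nat and \<phi> :: "('b list \<Rightarrow> 'm) \<Rightarrow> 'k"
  assumes lin: "lin_functional \<pi> lact n \<phi>"
begin

lemma lin_functional_add: "z \<in> MT n \<Longrightarrow> z' \<in> MT n \<Longrightarrow> \<phi> (\<lambda>v. z v + z' v) = \<phi> z + \<phi> z'"
  using lin by (simp add: lin_functional_def)

lemma lin_functional_smulM: "z \<in> MT n \<Longrightarrow> \<phi> (\<lambda>v. smulM \<pi> lact c (z v)) = c * \<phi> z"
  using lin by (simp add: lin_functional_def)

lemma lin_functional_zero: "\<phi> (\<lambda>v. 0) = 0"
proof -
  have "\<phi> (\<lambda>v. 0) + \<phi> (\<lambda>v. 0) = \<phi> (\<lambda>v. 0)"
    using lin_functional_add[OF MT_zero MT_zero] by simp
  then show ?thesis by (metis add_cancel_right_right)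
qed

lemma lin_functional_uminus: "z \<in> MT n \<Longrightarrow> \<phi> (\<lambda>v. - z v) = - \<phi> z"
  using lin_functional_add[OF _ MT_uminus, of z z] lin_functional_zero
  by (simp add: eq_neg_iff_add_eq_0 add.commute)

lemma lin_functional_diff: "z \<in> MT n \<Longrightarrow> z' \<in> MT n \<Longrightarrow> \<phi> (\<lambda>v. z v - z' v) = \<phi> z - \<phi> z'"
  using lin_functional_add[OF _ MT_uminus, of z z'] lin_functional_uminus[of z'] by simp

lemma lin_functional_sum:
  "finite S \<Longrightarrow> (\<And>s. s \<in> S \<Longrightarrow> F s \<in> MT n) \<Longrightarrow> \<phi> (\<lambda>v. \<Sum>s\<in>S. F s v) = (\<Sum>s\<in>S. \<phi> (F s))"
proof (induction S rule: finite_induct)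
  case (insert s S)
  then show ?case
    using lin_functional_add[of "F s" "\<lambda>v. \<Sum>s\<in>S. F s v"] MT_sum[of S F n] by simp
qed (simp add: lin_functional_zero)

lemma lin_functional_sum_mtens:
  assumes "finite I" "\<And>i j. (i, j) \<in> I \<Longrightarrow> length (u i j) = n"
  shows "\<phi> (\<lambda>v. \<Sum>(i, j)\<in>I. mtens (c i j) (u i j) v) = (\<Sum>(i, j)\<in>I. eta \<phi> (u i j) (c i j))"
proof -
  have "mtens (c (fst s) (snd s)) (u (fst s) (snd s)) \<in> MT n" if "s \<in> I" for s
    using that assms(2) by (cases s) (auto intro: MT_mtens)
  from lin_functional_sum[OF assms(1) this] show ?thesis by (simp add: split_def eta_def)
qed

end

lemma finite_index_pairs: "finite {(i, j). i + j \<le> (K::nat)}"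
  by (rule finite_subset[of _ "{..K} \<times> {..K}"]) auto

(* The summands are reindexed so as to match those of cup_gf (and, for cap_r, of cup_fg)
   term by term. *)
lemma cap_l_both_odd:
  assumes "odd p" "odd (q - p)" "p \<le> q"
  shows "cap_l N \<pi> lact ract p q f m w =
    (\<lambda>v. - (\<Sum>(i, j)\<in>{(i, j). i + j \<le> N - 2}.
       mtens (lact (\<pi> (wd (sub w (i + nu N (q - p)) (N - 2 - i - j)))
                    * f (sub w (nu N (q - p) + N - j - 2) (nu N p))
                    * \<pi> (wd (sub w (nu N p + nu N (q - p) + N - j - 2) j)))
                   (ract m (\<pi> (wd (sub w 0 i)))))
             (sub w i (nu N (q - p))) v))"
proof -
  obtain p' r' where p: "p = 2 * p' + 1" and r: "q - p = 2 * r' + 1"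
    using assms(1,2) by (meson oddE)
  have half: "p div 2 = p'" "q div 2 = p' + r' + 1" using p r assms(3) by simp_all
  have nu: "nu N p = N * p' + 1" "nu N (q - p) = N * r' + 1" using p r by (simp_all add: nu_def)
  show ?thesis
    unfolding cap_l_def using assms(1,2)
    by (intro ext arg_cong[where f=uminus] sum.cong) (auto simp: Let_def half nu algebra_simps)
qed

lemma cap_r_both_odd:
  assumes "odd p" "odd (q - p)" "p \<le> q"
  shows "cap_r N \<pi> lact ract p q f m w =
    (\<lambda>v. \<Sum>(i, j)\<in>{(i, j). i + j \<le> N - 2}.
       mtens (lact (\<pi> (wd (sub w (nu N p + nu N (q - p) + N - j - 2) j)))
                   (ract m (\<pi> (wd (sub w 0 i)) * f (sub w i (nu N p))
                            * \<pi> (wd (sub w (i + nu N p) (N - 2 - i - j))))))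
             (sub w (nu N p + N - j - 2) (nu N (q - p))) v)"
proof -
  obtain p' r' where p: "p = 2 * p' + 1" and r: "q - p = 2 * r' + 1"
    using assms(1,2) by (meson oddE)
  have half: "p div 2 = p'" "q div 2 = p' + r' + 1" using p r assms(3) by simp_all
  have nu: "nu N p = N * p' + 1" "nu N (q - p) = N * r' + 1" using p r by (simp_all add: nu_def)
  show ?thesis
    unfolding cap_r_def using assms(1,2)
    by (intro ext sum.cong) (auto simp: Let_def half nu algebra_simps)
qed

lemma MT_cap_l:
  assumes "p \<le> q" "N \<ge> 1" "length w = nu N q"
  shows "cap_l N \<pi> lact ract p q f m w \<in> MT (nu N (q - p))"
proof (cases "odd p \<and> odd (q - p)")
  case True
  then show ?thesis
    unfolding cap_l_both_odd[OF conjunct1[OF True] conjunct2[OF True] assms(1)]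
    by (intro MT_uminus MT_sum_mtens finite_index_pairs)
      (use assms in \<open>auto intro: length_sub_both_odd\<close>)
next
  case False
  then show ?thesis
    unfolding cap_l_def if_not_P[OF False]
    using nu_eq_add_nu_diff[OF False assms(1), of N] assms(3) by (simp add: MT_mtens)
qed

lemma lin_functional_cap_l:
  assumes "p \<le> q" "N \<ge> 1" "length w = nu N q" and lin: "lin_functional \<pi> lact (nu N (q - p)) \<phi>"
  shows "\<phi> (cap_l N \<pi> lact ract p q f m w) = cup_gf N \<pi> lact ract p (q - p) f (eta \<phi>) w m"
proof (cases "odd p \<and> odd (q - p)")
  case True
  have len: "length (sub w i (nu N (q - p))) = nu N (q - p)"
    if "(i, j) \<in> {(i, j). i + j \<le> N - 2}" for i j
    using that True assms by (intro length_sub_both_odd) auto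
  from True have "odd (q - p) \<and> odd p" by simp
  then show ?thesis
    unfolding cap_l_both_odd[OF conjunct1[OF True] conjunct2[OF True] assms(1)]
      cup_gf_def if_P[OF \<open>odd (q - p) \<and> odd p\<close>] Let_def
    by (simp only: lin_functional_uminus[OF lin MT_sum_mtens[OF finite_index_pairs len]]
        lin_functional_sum_mtens[OF lin finite_index_pairs len])
next
  case False
  then have "\<not> (odd (q - p) \<and> odd p)" by blast
  show ?thesis
    unfolding cap_l_def cup_gf_def if_not_P[OF False] if_not_P[OF \<open>\<not> (odd (q - p) \<and> odd p)\<close>]
    by (simp add: eta_def)
qed

lemma MT_signM_cap_r:
  assumes "p \<le> q" "N \<ge> 1" "length w = nu N q"
  shows "(\<lambda>v. signM (p * q) (cap_r N \<pi> lact ract p q f m w v)) \<in> MT (nu N (q - p))"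
proof (cases "odd p \<and> odd (q - p)")
  case True
  then have "even (p * q)" using assms(1) by auto
  then show ?thesis
    unfolding cap_r_both_odd[OF conjunct1[OF True] conjunct2[OF True] assms(1)]
      signM_even[OF \<open>even (p * q)\<close>]
    by (intro MT_sum_mtens finite_index_pairs)
      (use True assms in \<open>auto intro: length_sub_both_odd\<close>)
next
  case False
  then show ?thesis
    unfolding cap_r_def if_not_P[OF False]
    using nu_eq_add_nu_diff[OF False assms(1), of N] assms(3) by (simp add: MT_mtens)
qed

lemma lin_functional_signM_cap_r:
  assumes "p \<le> q" "N \<ge> 1" "length w = nu N q" and lin: "lin_functional \<pi> lact (nu N (q - p)) \<phi>"
  shows "\<phi> (\<lambda>v. signM (p * q) (cap_r N \<pi> lact ract p q f m w v))
    = (-1) ^ (p * (q - p)) * cup_fg N \<pi> lact ract p (q - p) f (eta \<phi>) w m"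
proof (cases "odd p \<and> odd (q - p)")
  case True
  then have "even (p * q)" using assms(1) by auto
  have len: "length (sub w (nu N p + N - j - 2) (nu N (q - p))) = nu N (q - p)"
    if "(i, j) \<in> {(i, j). i + j \<le> N - 2}" for i j
    using True assms by (intro length_sub_both_odd) auto
  from True have "odd (p * (q - p))" by simp
  then show ?thesis
    unfolding cap_r_both_odd[OF conjunct1[OF True] conjunct2[OF True] assms(1)]
      signM_even[OF \<open>even (p * q)\<close>] cup_fg_def if_P[OF True] Let_def
    by (simp only: lin_functional_sum_mtens[OF lin finite_index_pairs len]) simp
next
  case False
  then have "even (p * (q - p))" by simp
  show ?thesis
    unfolding cap_r_def cup_fg_def if_not_P[OF False] using \<open>even (p * (q - p))\<close>
    by (simp add: eta_def)
qed

lemma lin_functional_cap_bracket: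
  assumes "bimodule \<pi> lact ract" "p \<le> q" "N \<ge> 1" "x \<in> tens (nu N q)"
    and lin: "lin_functional \<pi> lact (nu N (q - p)) \<phi>"
  shows "\<phi> (cap_bracket N \<pi> lact ract p q f m x)
    = (\<Sum>w\<in>{u. x u \<noteq> 0}. x w * (cup_gf N \<pi> lact ract p (q - p) f (eta \<phi>) w m
          - (-1) ^ (p * (q - p)) * cup_fg N \<pi> lact ract p (q - p) f (eta \<phi>) w m))"
proof -
  let ?S = "{u. x u \<noteq> 0}"
  let ?l = "cap_l N \<pi> lact ract p q f m" and ?r = "cap_r N \<pi> lact ract p q f m"
  have fin: "finite ?S" and len: "\<And>w. w \<in> ?S \<Longrightarrow> length w = nu N q"
    using assms(4) by (auto simp: tens_def TV_def)
  note MT_l = MT_cap_l[OF assms(2,3) len] and MT_r = MT_signM_cap_r[OF assms(2,3) len]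
  have "\<phi> (cap_bracket N \<pi> lact ract p q f m x)
      = (\<Sum>w\<in>?S. \<phi> (\<lambda>v. smulM \<pi> lact (x w) (?l w v - signM (p * q) (?r w v))))"
    unfolding cap_bracket_def
    by (rule lin_functional_sum[OF lin fin]) (intro MT_smulM[OF assms(1)] MT_diff MT_l MT_r)
  also have "\<dots> = (\<Sum>w\<in>?S. x w * (\<phi> (?l w) - \<phi> (\<lambda>v. signM (p * q) (?r w v))))"
    by (intro sum.cong refl)
      (simp add: lin_functional_smulM[OF lin MT_diff[OF MT_l MT_r]] lin_functional_diff[OF lin MT_l MT_r])
  also have "\<dots> = (\<Sum>w\<in>?S. x w * (cup_gf N \<pi> lact ract p (q - p) f (eta \<phi>) w m
          - (-1) ^ (p * (q - p)) * cup_fg N \<pi> lact ract p (q - p) f (eta \<phi>) w m))"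
    by (intro sum.cong refl)
      (simp add: lin_functional_cap_l[OF assms(2,3) len lin] lin_functional_signM_cap_r[OF assms(2,3) len lin])
  finally show ?thesis .
qed

theorem proposition4p3:
  fixes N :: nat
    and R :: "('b list \<Rightarrow> 'k::field) set"
    and \<pi> :: "('b list \<Rightarrow> 'k) \<Rightarrow> 'a::ring_1"
    and lact :: "'a \<Rightarrow> 'm::ab_group_add \<Rightarrow> 'm"
    and ract :: "'m \<Rightarrow> 'a \<Rightarrow> 'm"
    and p q :: nat
    and f :: "'b list \<Rightarrow> 'a"
    and \<phi> :: "('b list \<Rightarrow> 'm) \<Rightarrow> 'k"
  assumes "N \<ge> 2"
    and "subspace_tens N R"
    and "presentation R \<pi>"
    and "bimodule \<pi> lact ract"
    and "p \<le> q"
    and "lin_functional \<pi> lact (nu N (q - p)) \<phi>"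
  shows "\<forall>x\<in>KW N R (nu N q). \<forall>m.
           (-1) ^ (p * (q - p)) * \<phi> (cap_bracket N \<pi> lact ract p q f m x)
         = - cup_bracket N \<pi> lact ract p (q - p) f (eta \<phi>) x m"
proof (intro ballI allI)
  fix x m
  assume "x \<in> KW N R (nu N q)"
  then have "x \<in> tens (nu N q)" using KW_subset_tens by blast
  moreover have "N \<ge> 1" using assms(1) by simp
  ultimately show "(-1) ^ (p * (q - p)) * \<phi> (cap_bracket N \<pi> lact ract p q f m x)
         = - cup_bracket N \<pi> lact ract p (q - p) f (eta \<phi>) x m"
    by (simp add: lin_functional_cap_bracket[OF assms(4,5) \<open>N \<ge> 1\<close> _ assms(6)]
        cup_bracket_def sum_distrib_left sum_negf[symmetric] algebra_simps)
qed

end
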